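(* Let $\bar\alpha=(\alpha_1,\dots,\alpha_n)$ and $\bar z=(z_1,\dots,z_k)$ be sequences of pairwise distinct complex numbers. For every $(\boldsymbol l,\boldsymbol m)\in\mathcal Z_{kn}$, the subspace $\mathfrak P_{kn}[\boldsymbol l,\boldsymbol m]\subset\mathfrak P_{kn}$ is invariant under $\pi^{\langle n\rangle}_{\bar z}(\mathcal B^{\langle n\rangle}_{\bar\alpha})$ and under $\pi^{\langle k\rangle}_{-\bar\alpha}(\mathcal B^{\langle k\rangle}_{\bar z})$.
   Context: $\mathfrak P_{kn}$ is the space of polynomials in pairwise anticommuting variables $\xi_{ai}$ ($a\le k$, $i\le n$); the left derivation $\partial_{ai}$ sends a monomial $\xi_{c_1}\cdots\xi_{c_l}$ to $(-1)^{s-1}$ times the monomial with the $s$-th factor removed if $c_s=(a,i)$, and to $0$ otherwise. $\pi^{\langle n\rangle}_{\bar z}(e^{\langle n\rangle}_{ij}\otimes t^s)=\sum_a z_a^s\xi_{ai}\partial_{aj}$ and $\pi^{\langle k\rangle}_{-\bar\alpha}(e^{\langle k\rangle}_{ab}\otimes t^s)=\sum_i(-\alpha_i)^s\xi_{ai}\partial_{bi}$ define actions of $\mathfrak{gl}_n[t]$ and $\mathfrak{gl}_k[t]$. $\mathcal Z_{kn}$ is the set of $(\boldsymbol l,\boldsymbol m)\in\mathbb Z_{\ge0}^k\times\mathbb Z_{\ge0}^n$ with $l_a\le n$, $m_i\le k$, $\sum_al_a=\sum_im_i$; $\mathfrak P_{kn}[\boldsymbol l,\boldsymbol m]$ is spanned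 by monomials $\prod\xi_{ai}^{d_{ai}}$, $d_{ai}\in\{0,1\}$, with $\sum_ad_{ai}=m_i$ and $\sum_id_{ai}=l_a$. Bethe algebra: for $\mathfrak{gl}_N[t]$ with generators $e_{ij}$ and $g(x)=\sum_{s\ge0}(g\otimes t^s)x^{-s-1}$, and pairwise distinct $\bar\beta\in\mathbb C^N$, write $\operatorname{rdet}\bigl((\tfrac d{dx}-\beta_i)\delta_{ij}-e_{ji}(x)\bigr)_{i,j=1}^N=(d/dx)^N+\sum_iB_i(x)(d/dx)^{N-i}$ (powers of $d/dx$ on the right, $\operatorname{rdet}A=\sum_\sigma(-1)^\sigma a_{1\sigma(1)}\cdots a_{N\sigma(N)}$), $B_i(x)=\sum_{j\ge0}B_{ij}x^{-j}$; $\mathcal B^{\langle N\rangle}_{\bar\beta}$ is the subalgebra of $U(\mathfrak{gl}_N[t])$ generated by the $B_{ij}$, $j\ge1$. *)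

theory Defs
  imports Complex_Main "HOL-Combinatorics.Permutations"
begin

text \<open>A generator (i,j,s) stands for e_ij (x) t^s. Elements of the free associative
  algebra are coefficient functions on words; U(gl_N[t]) is a quotient of it, and
  representations of gl_N[t] factor through it.\<close>

type_synonym gen = "nat \<times> nat \<times> nat"
type_synonym falg = "gen list \<Rightarrow> complex"

definition fa_zero :: falg where "fa_zero = (\<lambda>w. 0)"
definition fa_one :: falg where "fa_one = (\<lambda>w. if w = [] then 1 else 0)"
definition fa_gen :: "gen \<Rightarrow> falg" where "fa_gen g = (\<lambda>w. if w = [g] then 1 else 0)"
definition fa_add :: "falg \<Rightarrow> falg \<Rightarrow> falg" where "fa_add p q = (\<lambda>w. p w + q w)"
definition fa_smul :: "complex \<Rightarrow> falg \<Rightarrow> falg" where "fa_smul c p = (\<lambda>w. c * p w)"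
definition fa_mult :: "falg \<Rightarrow> falg \<Rightarrow> falg" where
  "fa_mult p q = (\<lambda>w. \<Sum>i\<in>{0..length w}. p (take i w) * q (drop i w))"

text \<open>dsym m j = coefficient of x^(-j) (d/dx)^m (powers of d/dx on the right).\<close>

type_synonym dsym = "nat \<Rightarrow> nat \<Rightarrow> falg"

definition sym_one :: dsym where
  "sym_one = (\<lambda>m j. if m = 0 \<and> j = 0 then fa_one else fa_zero)"

text \<open>Product, using  (d/dx)^a g = sum_r (a choose r) g^(r) (d/dx)^(a-r)  and
  (d/dx)^r x^(-j) = (-1)^r pochhammer j r x^(-j-r).\<close>

definition sym_mult :: "dsym \<Rightarrow> dsym \<Rightarrow> dsym" where
  "sym_mult f g = (\<lambda>M J w.
     \<Sum>a\<in>{0..M+J}. \<Sum>r\<in>{0..min a J}.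
       if M + r < a then 0 else
       (\<Sum>j1\<in>{0..J-r}.
          of_nat (a choose r) * (-1)^r * pochhammer (of_nat (J - r - j1)) r
          * fa_mult (f a j1) (g (M + r - a) (J - r - j1)) w))"

text \<open>Matrix entry (i,j):  delta_ij (d/dx - beta_i) - e_ji(x),
  with e_ji(x) = sum_s (e_ji (x) t^s) x^(-s-1).\<close>

definition bethe_entry :: "(nat \<Rightarrow> complex) \<Rightarrow> nat \<Rightarrow> nat \<Rightarrow> dsym" where
  "bethe_entry \<beta> i j = (\<lambda>m J.
     if m = 1 \<and> J = 0 then (if i = j then fa_one else fa_zero)
     else if m = 0 \<and> J = 0 then (if i = j then fa_smul (- \<beta> i) fa_one else fa_zero)
     else if m = 0 \<and> 1 \<le> J then fa_smul (-1) (fa_gen (j, i, J - 1))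
     else fa_zero)"

definition bethe_rdet :: "nat \<Rightarrow> (nat \<Rightarrow> complex) \<Rightarrow> dsym" where
  "bethe_rdet N \<beta> = (\<lambda>m J w.
     \<Sum>\<sigma>\<in>{\<sigma>. \<sigma> permutes {1..N}}.
       of_int (sign \<sigma>) *
       foldr (\<lambda>r acc. sym_mult (bethe_entry \<beta> r (\<sigma> r)) acc) [1..<N+1] sym_one m J w)"

text \<open>rdet = (d/dx)^N + sum_i B_i(x) (d/dx)^(N-i),  B_i(x) = sum_j B_ij x^(-j).\<close>

definition bethe_B :: "nat \<Rightarrow> (nat \<Rightarrow> complex) \<Rightarrow> nat \<Rightarrow> nat \<Rightarrow> falg" where
  "bethe_B N \<beta> i j = bethe_rdet N \<beta> (N - i) j"

inductive_set bethe_alg :: "nat \<Rightarrow> (nat \<Rightarrow> complex) \<Rightarrow> falg set" for N \<beta> where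
  one: "fa_one \<in> bethe_alg N \<beta>"
| gen: "1 \<le> i \<Longrightarrow> i \<le> N \<Longrightarrow> 1 \<le> j \<Longrightarrow> bethe_B N \<beta> i j \<in> bethe_alg N \<beta>"
| add: "p \<in> bethe_alg N \<beta> \<Longrightarrow> q \<in> bethe_alg N \<beta> \<Longrightarrow> fa_add p q \<in> bethe_alg N \<beta>"
| smul: "p \<in> bethe_alg N \<beta> \<Longrightarrow> fa_smul c p \<in> bethe_alg N \<beta>"
| mult: "p \<in> bethe_alg N \<beta> \<Longrightarrow> q \<in> bethe_alg N \<beta> \<Longrightarrow> fa_mult p q \<in> bethe_alg N \<beta>"

text \<open>An element is a coefficient function on sets T of index pairs (a,i); T stands for
  the monomial prod_{(a,i) in T} xi_ai with factors in lexicographic increasing order.\<close>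

type_synonym gvec = "(nat \<times> nat) set \<Rightarrow> complex"

definition var_less :: "nat \<times> nat \<Rightarrow> nat \<times> nat \<Rightarrow> bool" where
  "var_less d c \<longleftrightarrow> fst d < fst c \<or> (fst d = fst c \<and> snd d < snd c)"

definition gsign :: "nat \<times> nat \<Rightarrow> (nat \<times> nat) set \<Rightarrow> complex" where
  "gsign c S = (-1) ^ card {d \<in> S. var_less d c}"

text \<open>Left multiplication by xi_c and left derivation d_c.\<close>

definition gxi :: "nat \<times> nat \<Rightarrow> gvec \<Rightarrow> gvec" where
  "gxi c v = (\<lambda>T. if c \<in> T then gsign c (T - {c}) * v (T - {c}) else 0)"

definition gdd :: "nat \<times> nat \<Rightarrow> gvec \<Rightarrow> gvec" where
  "gdd c v = (\<lambda>T. if c \<notin> T then gsign c T * v (insert c T) else 0)"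

definition Pkn :: "nat \<Rightarrow> nat \<Rightarrow> gvec set" where
  "Pkn k n = {v. \<forall>T. v T \<noteq> 0 \<longrightarrow> T \<subseteq> {1..k} \<times> {1..n}}"

definition Pkn_lm :: "nat \<Rightarrow> nat \<Rightarrow> (nat \<Rightarrow> nat) \<Rightarrow> (nat \<Rightarrow> nat) \<Rightarrow> gvec set" where
  "Pkn_lm k n l m = {v. \<forall>T. v T \<noteq> 0 \<longrightarrow>
      T \<subseteq> {1..k} \<times> {1..n}
      \<and> (\<forall>i\<in>{1..n}. card {a. (a, i) \<in> T} = m i)
      \<and> (\<forall>a\<in>{1..k}. card {i. (a, i) \<in> T} = l a)}"

definition Zkn :: "nat \<Rightarrow> nat \<Rightarrow> ((nat \<Rightarrow> nat) \<times> (nat \<Rightarrow> nat)) set" where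
  "Zkn k n = {(l, m). (\<forall>a\<in>{1..k}. l a \<le> n) \<and> (\<forall>i\<in>{1..n}. m i \<le> k)
                     \<and> (\<Sum>a=1..k. l a) = (\<Sum>i=1..n. m i)}"

fun word_rep :: "(gen \<Rightarrow> gvec \<Rightarrow> gvec) \<Rightarrow> gen list \<Rightarrow> gvec \<Rightarrow> gvec" where
  "word_rep \<rho> [] v = v"
| "word_rep \<rho> (g # w) v = \<rho> g (word_rep \<rho> w v)"

definition fa_rep :: "(gen \<Rightarrow> gvec \<Rightarrow> gvec) \<Rightarrow> falg \<Rightarrow> gvec \<Rightarrow> gvec" where
  "fa_rep \<rho> p v = (\<lambda>T. \<Sum>w\<in>{w. p w \<noteq> 0}. p w * word_rep \<rho> w v T)"

definition pi_n :: "nat \<Rightarrow> (nat \<Rightarrow> complex) \<Rightarrow> gen \<Rightarrow> gvec \<Rightarrow> gvec" where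
  "pi_n k z g v = (case g of (i, j, s) \<Rightarrow>
     (\<lambda>T. \<Sum>a=1..k. z a ^ s * gxi (a, i) (gdd (a, j) v) T))"

definition pi_k :: "nat \<Rightarrow> (nat \<Rightarrow> complex) \<Rightarrow> gen \<Rightarrow> gvec \<Rightarrow> gvec" where
  "pi_k n \<alpha> g v = (case g of (a, b, s) \<Rightarrow>
     (\<lambda>T. \<Sum>i=1..n. (- \<alpha> i) ^ s * gxi (a, i) (gdd (b, i) v) T))"

end

theory Submission
  imports Defs "HOL-Library.Function_Algebras"
begin

text \<open>Give \<open>e\<^sub>i\<^sub>j \<otimes> t\<^sup>s\<close> the weight \<open>\<epsilon>\<^sub>i - \<epsilon>\<^sub>j\<close>. The Bethe matrix entry in row \<open>r\<close> and column
  \<open>\<sigma> r\<close> has weight \<open>\<epsilon>\<^bsub>\<sigma> r\<^esub> - \<epsilon>\<^sub>r\<close>, so every term of the row determinant, and hence every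
  element of the Bethe algebra, is a combination of words of weight zero. Under \<open>\<pi>\<^sup>n\<^sub>z\<close> the
  generator \<open>e\<^sub>i\<^sub>j \<otimes> t\<^sup>s\<close> replaces a factor \<open>\<xi>\<^sub>a\<^sub>j\<close> by \<open>\<xi>\<^sub>a\<^sub>i\<close>: the row counts stay fixed and the
  column counts shift by \<open>\<epsilon>\<^sub>i - \<epsilon>\<^sub>j\<close>. Under \<open>\<pi>\<^sup>k\<^sub>-\<^sub>\<alpha>\<close> the same holds with rows and columns
  exchanged. Words of weight zero therefore preserve both \<open>l\<close> and \<open>m\<close>.\<close>

definition eps :: "nat \<Rightarrow> nat \<Rightarrow> int" where
  "eps i = (\<lambda>x. of_bool (x = i))"

definition word_weight :: "gen list \<Rightarrow> nat \<Rightarrow> int" where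
  "word_weight w = (\<Sum>(i, j, _)\<leftarrow>w. eps i - eps j)"

lemma word_weight_Nil [simp]: "word_weight [] = 0"
  by (simp add: word_weight_def)

lemma word_weight_Cons [simp]: "word_weight ((i, j, s) # w) = eps i - eps j + word_weight w"
  by (simp add: word_weight_def)

lemma word_weight_append: "word_weight (u @ v) = word_weight u + word_weight v"
  by (simp add: word_weight_def)

lemma sum_list_eps_permutes:
  assumes "\<sigma> permutes {1..N}"
  shows "(\<Sum>r\<leftarrow>[1..<N+1]. eps (\<sigma> r) - eps r) = 0"
proof -
  have "(\<Sum>r\<leftarrow>[1..<N+1]. eps (\<sigma> r) - eps r) = (\<Sum>r\<in>{1..N}. eps (\<sigma> r) - eps r)"
    by (simp add: sum_list_distinct_conv_sum_set atLeastLessThanSuc_atLeastAtMost del: upt_Suc)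
  also have "\<dots> = (\<Sum>r\<in>{1..N}. eps (\<sigma> r)) - (\<Sum>r\<in>{1..N}. eps r)"
    by (simp add: sum_subtractf)
  also have "\<dots> = 0"
    using sum.permute[OF assms, of eps] by (simp add: comp_def)
  finally show ?thesis .
qed

definition fa_homogeneous :: "nat \<Rightarrow> (nat \<Rightarrow> int) \<Rightarrow> falg \<Rightarrow> bool" where
  "fa_homogeneous N \<mu> p \<longleftrightarrow>
     (\<forall>w. p w \<noteq> 0 \<longrightarrow> set w \<subseteq> {1..N} \<times> {1..N} \<times> UNIV \<and> word_weight w = \<mu>)"

lemma fa_homogeneous_zero: "fa_homogeneous N \<mu> fa_zero"
  by (simp add: fa_homogeneous_def fa_zero_def)

lemma fa_homogeneous_one: "fa_homogeneous N 0 fa_one"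
  by (simp add: fa_homogeneous_def fa_one_def)

lemma fa_homogeneous_gen:
  "i \<in> {1..N} \<Longrightarrow> j \<in> {1..N} \<Longrightarrow> fa_homogeneous N (eps i - eps j) (fa_gen (i, j, s))"
  by (simp add: fa_homogeneous_def fa_gen_def)

lemma fa_homogeneous_smul: "fa_homogeneous N \<mu> p \<Longrightarrow> fa_homogeneous N \<mu> (fa_smul c p)"
  by (simp add: fa_homogeneous_def fa_smul_def)

lemma fa_homogeneous_add:
  "fa_homogeneous N \<mu> p \<Longrightarrow> fa_homogeneous N \<mu> q \<Longrightarrow> fa_homogeneous N \<mu> (fa_add p q)"
  unfolding fa_homogeneous_def fa_add_def by (metis add.right_neutral)

lemma fa_homogeneous_mult:
  assumes "fa_homogeneous N \<mu> p" "fa_homogeneous N \<nu> q"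
  shows "fa_homogeneous N (\<mu> + \<nu>) (fa_mult p q)"
  unfolding fa_homogeneous_def
proof (intro allI impI)
  fix w assume "fa_mult p q w \<noteq> 0"
  then obtain i where "p (take i w) * q (drop i w) \<noteq> 0"
    unfolding fa_mult_def by (rule sum.not_neutral_contains_not_neutral)
  then have "p (take i w) \<noteq> 0" "q (drop i w) \<noteq> 0" by auto
  with assms have "set (take i w) \<union> set (drop i w) \<subseteq> {1..N} \<times> {1..N} \<times> UNIV"
    and "word_weight (take i w) + word_weight (drop i w) = \<mu> + \<nu>"
    unfolding fa_homogeneous_def by auto
  then show "set w \<subseteq> {1..N} \<times> {1..N} \<times> UNIV \<and> word_weight w = \<mu> + \<nu>"
    by (metis append_take_drop_id set_append word_weight_append)
qed

definition sym_homogeneous :: "nat \<Rightarrow> (nat \<Rightarrow> int) \<Rightarrow> dsym \<Rightarrow> bool" where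
  "sym_homogeneous N \<mu> f \<longleftrightarrow> (\<forall>M J. fa_homogeneous N \<mu> (f M J))"

lemma sym_homogeneous_one: "sym_homogeneous N 0 sym_one"
  by (simp add: sym_homogeneous_def sym_one_def fa_homogeneous_one fa_homogeneous_zero)

lemma sym_homogeneous_mult:
  assumes "sym_homogeneous N \<mu> f" "sym_homogeneous N \<nu> g"
  shows "sym_homogeneous N (\<mu> + \<nu>) (sym_mult f g)"
  unfolding sym_homogeneous_def fa_homogeneous_def
proof (intro allI impI)
  fix M J w assume "sym_mult f g M J w \<noteq> 0"
  then obtain a b c d where "fa_mult (f a b) (g c d) w \<noteq> 0"
    unfolding sym_mult_def
    by (fastforce elim!: sum.not_neutral_contains_not_neutral split: if_splits)
  moreover have "fa_homogeneous N (\<mu> + \<nu>) (fa_mult (f a b) (g c d))"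
    using assms fa_homogeneous_mult unfolding sym_homogeneous_def by blast
  ultimately show "set w \<subseteq> {1..N} \<times> {1..N} \<times> UNIV \<and> word_weight w = \<mu> + \<nu>"
    unfolding fa_homogeneous_def by blast
qed

lemma sym_homogeneous_bethe_entry:
  assumes "i \<in> {1..N}" "j \<in> {1..N}"
  shows "sym_homogeneous N (eps j - eps i) (bethe_entry \<beta> i j)"
proof -
  have "fa_homogeneous N (eps j - eps i) (fa_gen (j, i, s))" for s
    using assms(2,1) by (rule fa_homogeneous_gen)
  then show ?thesis
    by (auto simp: sym_homogeneous_def bethe_entry_def fa_homogeneous_smul
        fa_homogeneous_one fa_homogeneous_zero)
qed

lemma sym_homogeneous_bethe_row_product:
  assumes "set rs \<subseteq> {1..N}" "\<sigma> ` set rs \<subseteq> {1..N}"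
  shows "sym_homogeneous N (\<Sum>r\<leftarrow>rs. eps (\<sigma> r) - eps r)
           (foldr (\<lambda>r acc. sym_mult (bethe_entry \<beta> r (\<sigma> r)) acc) rs sym_one)"
  using assms
  by (induction rs)
     (auto simp: sym_homogeneous_one intro!: sym_homogeneous_mult sym_homogeneous_bethe_entry)

lemma sym_homogeneous_bethe_rdet: "sym_homogeneous N 0 (bethe_rdet N \<beta>)"
  unfolding sym_homogeneous_def fa_homogeneous_def
proof (intro allI impI)
  fix M J w assume "bethe_rdet N \<beta> M J w \<noteq> 0"
  then obtain \<sigma> where "\<sigma> \<in> {\<sigma>. \<sigma> permutes {1..N}}" and
    "of_int (sign \<sigma>)
       * foldr (\<lambda>r acc. sym_mult (bethe_entry \<beta> r (\<sigma> r)) acc) [1..<N+1] sym_one M J w \<noteq> 0"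
    unfolding bethe_rdet_def by (rule sum.not_neutral_contains_not_neutral)
  then have \<sigma>: "\<sigma> permutes {1..N}"
    and nonzero:
      "foldr (\<lambda>r acc. sym_mult (bethe_entry \<beta> r (\<sigma> r)) acc) [1..<N+1] sym_one M J w \<noteq> 0"
    by auto
  have "sym_homogeneous N (\<Sum>r\<leftarrow>[1..<N+1]. eps (\<sigma> r) - eps r)
      (foldr (\<lambda>r acc. sym_mult (bethe_entry \<beta> r (\<sigma> r)) acc) [1..<N+1] sym_one)"
    using permutes_image[OF \<sigma>]
    by (intro sym_homogeneous_bethe_row_product) (auto simp del: upt_Suc)
  then have "sym_homogeneous N 0
      (foldr (\<lambda>r acc. sym_mult (bethe_entry \<beta> r (\<sigma> r)) acc) [1..<N+1] sym_one)"
    by (simp only: sum_list_eps_permutes[OF \<sigma>])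
  with nonzero show "set w \<subseteq> {1..N} \<times> {1..N} \<times> UNIV \<and> word_weight w = 0"
    unfolding sym_homogeneous_def fa_homogeneous_def by blast
qed

lemma bethe_alg_homogeneous: "p \<in> bethe_alg N \<beta> \<Longrightarrow> fa_homogeneous N 0 p"
proof (induction rule: bethe_alg.induct)
  case one
  show ?case by (rule fa_homogeneous_one)
next
  case (gen i j)
  show ?case
    using sym_homogeneous_bethe_rdet by (metis bethe_B_def sym_homogeneous_def)
next
  case (add p q)
  show ?case using add.IH by (rule fa_homogeneous_add)
next
  case (smul p c)
  show ?case using smul.IH by (rule fa_homogeneous_smul)
next
  case (mult p q)
  show ?case using fa_homogeneous_mult[OF mult.IH] by (metis add_0)
qed

definition slice_card :: "(nat \<times> nat \<Rightarrow> nat) \<Rightarrow> (nat \<times> nat) set \<Rightarrow> nat \<Rightarrow> nat" where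
  "slice_card f T x = card {y \<in> T. f y = x}"

lemma card_column_eq_slice_card: "card {a. (a, i) \<in> T} = slice_card snd T i"
  unfolding slice_card_def
  by (rule bij_betw_same_card[of "\<lambda>a. (a, i)"]) (auto simp: bij_betw_def inj_on_def)

lemma card_row_eq_slice_card: "card {i. (a, i) \<in> T} = slice_card fst T a"
  unfolding slice_card_def
  by (rule bij_betw_same_card[of "\<lambda>i. (a, i)"]) (auto simp: bij_betw_def inj_on_def)

lemma Pkn_lm_slice_card:
  "Pkn_lm k n l m = {v. \<forall>T. v T \<noteq> 0 \<longrightarrow> T \<subseteq> {1..k} \<times> {1..n}
      \<and> (\<forall>i\<in>{1..n}. slice_card snd T i = m i) \<and> (\<forall>a\<in>{1..k}. slice_card fst T a = l a)}"
  by (simp add: Pkn_lm_def card_column_eq_slice_card card_row_eq_slice_card)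

lemma slice_card_exchange:
  assumes "finite T" "c \<in> T" "d \<notin> T - {c}"
  shows "int (slice_card f T x)
    = int (slice_card f (insert d (T - {c})) x) + of_bool (f c = x) - of_bool (f d = x)"
proof -
  define R where "R = {y \<in> T. f y = x} - {c}"
  have R: "finite R" "c \<notin> R" "d \<notin> R"
    using assms by (auto simp: R_def)
  have "{y \<in> T. f y = x} = (if f c = x then insert c R else R)"
    using assms(2) by (auto simp: R_def)
  moreover have "{y \<in> insert d (T - {c}). f y = x} = (if f d = x then insert d R else R)"
    by (auto simp: R_def)
  ultimately show ?thesis
    using R by (simp add: slice_card_def)
qed

definition exchange_action ::
    "nat \<Rightarrow> (nat \<times> nat) set \<Rightarrow> (nat \<times> nat \<Rightarrow> nat) \<Rightarrow> (nat \<times> nat \<Rightarrow> nat)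
       \<Rightarrow> (gen \<Rightarrow> gvec \<Rightarrow> gvec) \<Rightarrow> bool" where
  "exchange_action N B f g \<rho> \<longleftrightarrow>
     (\<forall>i\<in>{1..N}. \<forall>j\<in>{1..N}. \<forall>s u T. \<rho> (i, j, s) u T \<noteq> 0 \<longrightarrow>
        (\<exists>c d. c \<in> B \<and> f c = i \<and> f d = j \<and> g c = g d
               \<and> c \<in> T \<and> d \<notin> T - {c} \<and> u (insert d (T - {c})) \<noteq> 0))"

lemma gxi_gdd_nonzero:
  assumes "gxi c (gdd d u) T \<noteq> 0"
  shows "c \<in> T \<and> d \<notin> T - {c} \<and> u (insert d (T - {c})) \<noteq> 0"
  using assms by (auto simp: gxi_def gdd_def split: if_splits)

lemma exchange_action_pi_n: "exchange_action n ({1..k} \<times> {1..n}) snd fst (pi_n k z)"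
  unfolding exchange_action_def pi_n_def
  by (fastforce elim!: sum.not_neutral_contains_not_neutral dest!: gxi_gdd_nonzero)

lemma exchange_action_pi_k: "exchange_action k ({1..k} \<times> {1..n}) fst snd (pi_k n \<alpha>)"
  unfolding exchange_action_def pi_k_def
  by (fastforce elim!: sum.not_neutral_contains_not_neutral dest!: gxi_gdd_nonzero)

lemma exchange_action_word_rep:
  assumes \<rho>: "exchange_action N B f g \<rho>" and "finite B"
    and v: "\<forall>T. v T \<noteq> 0 \<longrightarrow> T \<subseteq> B"
    and "set w \<subseteq> {1..N} \<times> {1..N} \<times> UNIV" and "word_rep \<rho> w v T \<noteq> 0"
  shows "\<exists>T0. v T0 \<noteq> 0 \<and> T \<subseteq> B
    \<and> (\<forall>x. int (slice_card f T x) = int (slice_card f T0 x) + word_weight w x)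
    \<and> slice_card g T = slice_card g T0"
  using assms(4,5)
proof (induction w arbitrary: T)
  case Nil
  then show ?case using v by auto
next
  case (Cons h w)
  obtain i j s where h: "h = (i, j, s)" by (cases h)
  with Cons.prems have "i \<in> {1..N}" "j \<in> {1..N}" "\<rho> (i, j, s) (word_rep \<rho> w v) T \<noteq> 0"
    by auto
  then obtain c d where c: "c \<in> B" "f c = i" "f d = j" "g c = g d"
    and T: "c \<in> T" "d \<notin> T - {c}" "word_rep \<rho> w v (insert d (T - {c})) \<noteq> 0"
    using \<rho> unfolding exchange_action_def by blast
  obtain T0 where T0: "v T0 \<noteq> 0" "insert d (T - {c}) \<subseteq> B"
    and f: "\<forall>x. int (slice_card f (insert d (T - {c})) x)
              = int (slice_card f T0 x) + word_weight w x"
    and g: "slice_card g (insert d (T - {c})) = slice_card g T0"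
    using Cons.IH[OF _ T(3)] Cons.prems(1) by auto
  have "T \<subseteq> B" using T0(2) c(1) by auto
  then have exchange: "int (slice_card h T x)
      = int (slice_card h (insert d (T - {c})) x) + of_bool (h c = x) - of_bool (h d = x)" for h x
    using slice_card_exchange[OF _ T(1,2)] finite_subset \<open>finite B\<close> by blast
  have "slice_card g T = slice_card g T0"
    using exchange[of g] g c(4) by (auto simp: fun_eq_iff)
  moreover have "int (slice_card f T x) = int (slice_card f T0 x) + word_weight (h # w) x" for x
    using exchange[of f x] f c(2,3) h by (simp add: eps_def)
  ultimately show ?case using T0(1) \<open>T \<subseteq> B\<close> by blast
qed

lemma exchange_action_fa_rep:
  assumes "exchange_action N B f g \<rho>" "finite B" "\<forall>T. v T \<noteq> 0 \<longrightarrow> T \<subseteq> B"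
    and "fa_homogeneous N 0 p" and "fa_rep \<rho> p v T \<noteq> 0"
  shows "\<exists>T0. v T0 \<noteq> 0 \<and> T \<subseteq> B
    \<and> slice_card f T = slice_card f T0 \<and> slice_card g T = slice_card g T0"
proof -
  obtain w where "p w \<noteq> 0" "word_rep \<rho> w v T \<noteq> 0"
    using assms(5) unfolding fa_rep_def by (auto elim: sum.not_neutral_contains_not_neutral)
  with assms(4) have "set w \<subseteq> {1..N} \<times> {1..N} \<times> UNIV" and weight: "word_weight w = 0"
    unfolding fa_homogeneous_def by auto
  then obtain T0 where "v T0 \<noteq> 0" "T \<subseteq> B" "slice_card g T = slice_card g T0"
    and f: "\<forall>x. int (slice_card f T x) = int (slice_card f T0 x) + word_weight w x"
    using exchange_action_word_rep[OF assms(1-3)] \<open>word_rep \<rho> w v T \<noteq> 0\<close> by blast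
  moreover have "slice_card f T = slice_card f T0"
    using f weight by (simp add: fun_eq_iff)
  ultimately show ?thesis by blast
qed

lemma Pkn_lm_exchange_action_invariant:
  assumes \<rho>: "exchange_action N ({1..k} \<times> {1..n}) f g \<rho>" and fg: "{f, g} = {fst, snd}"
    and p: "fa_homogeneous N 0 p" and v: "v \<in> Pkn_lm k n l m"
  shows "fa_rep \<rho> p v \<in> Pkn_lm k n l m"
  unfolding Pkn_lm_slice_card
proof (intro CollectI allI impI)
  have v_slices: "T \<subseteq> {1..k} \<times> {1..n} \<and> (\<forall>i\<in>{1..n}. slice_card snd T i = m i)
      \<and> (\<forall>a\<in>{1..k}. slice_card fst T a = l a)" if "v T \<noteq> 0" for T
    using v that unfolding Pkn_lm_slice_card by simp
  then have v_box: "\<forall>T. v T \<noteq> 0 \<longrightarrow> T \<subseteq> {1..k} \<times> {1..n}"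
    by blast
  have box_finite: "finite ({1..k} \<times> {1..n})"
    by simp
  fix T assume "fa_rep \<rho> p v T \<noteq> 0"
  then obtain T0 where "v T0 \<noteq> 0" "T \<subseteq> {1..k} \<times> {1..n}"
    and "slice_card f T = slice_card f T0" "slice_card g T = slice_card g T0"
    using exchange_action_fa_rep[OF \<rho> box_finite v_box p] by blast
  moreover have "(f = fst \<and> g = snd) \<or> (f = snd \<and> g = fst)"
    using fg by (simp add: doubleton_eq_iff)
  ultimately show "T \<subseteq> {1..k} \<times> {1..n} \<and> (\<forall>i\<in>{1..n}. slice_card snd T i = m i)
      \<and> (\<forall>a\<in>{1..k}. slice_card fst T a = l a)"
    using v_slices[of T0] by auto
qed

theorem lemma5p5:
  fixes k n :: nat and \<alpha> z :: "nat \<Rightarrow> complex" and l m :: "nat \<Rightarrow> nat"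
  assumes "inj_on \<alpha> {1..n}" and "inj_on z {1..k}"
    and "(l, m) \<in> Zkn k n"
  shows "(\<forall>p\<in>bethe_alg n \<alpha>. \<forall>v\<in>Pkn_lm k n l m. fa_rep (pi_n k z) p v \<in> Pkn_lm k n l m)
       \<and> (\<forall>p\<in>bethe_alg k z. \<forall>v\<in>Pkn_lm k n l m. fa_rep (pi_k n \<alpha>) p v \<in> Pkn_lm k n l m)"
  using Pkn_lm_exchange_action_invariant[OF exchange_action_pi_n insert_commute
      bethe_alg_homogeneous]
    Pkn_lm_exchange_action_invariant[OF exchange_action_pi_k refl bethe_alg_homogeneous]
  by blast

end
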